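(* Let $X$, $Y$, $Z$ be random variables with values in $\mathcal{X}$, $\mathcal{Y}$, $\mathcal{Z}$ and joint distribution $P_{X,Y,Z}$, and let $n\ge 1$ be an integer. For $z\in\mathcal{Z}$ let $(x_1,y_1),\dots,(x_n,y_n)$ denote $n$ independent samples from the conditional joint distribution $P_{X,Y|Z=z}$ (written $(x_i,y_i)\sim P_{X,Y|z}^{\otimes n}$), and fix an index $i\in\{1,\dots,n\}$. Define $$\mathrm{C\text{-}InfoNCE}:=\sup_{f}\ \mathbb{E}_{z\sim P_Z}\Bigg[\mathbb{E}_{(x_i,y_i)\sim P_{X,Y|z}^{\otimes n}}\Big[\log\frac{e^{f(x_i,y_i,z)}}{\frac{1}{n}\sum_{j=1}^n e^{f(x_i,y_j,z)}}\Big]\Bigg],$$ where the supremum is over functions $f:\mathcal{X}\times\mathcal{Y}\times\mathcal{Z}\to\mathbb{R}$. Then $$\mathrm{C\text{-}InfoNCE}\le \mathbb{E}_{P_Z}\Big[D_{\mathrm{KL}}\big(P_{X,Y|Z}\,\|\,P_{X|Z}P_{Y|Z}\big)\Big]=\mathrm{MI}(X;Y|Z).$$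
   Context: $D_{\mathrm{KL}}$ denotes the Kullback–Leibler divergence. $P_Z$ is the marginal of $Z$; $P_{X,Y|Z=z}$, $P_{X|Z=z}$, $P_{Y|Z=z}$ are the conditional joint and conditional marginal distributions, and $P_{X|Z=z}P_{Y|Z=z}$ is their product measure. The conditional mutual information is $\mathrm{MI}(X;Y|Z):=\mathbb{E}_{z\sim P_Z}\big[D_{\mathrm{KL}}(P_{X,Y|Z=z}\,\|\,P_{X|Z=z}P_{Y|Z=z})\big]$. The functions $f$ are assumed measurable with all expectations well-defined. *)

theory Defs
  imports "HOL-Probability.Probability"
begin

text \<open>It is the library's KL divergence (integral of ln(dP/dQ) w.r.t. P) when P is absolutely
  continuous w.r.t. Q and the log-density is P-integrable, and infinity otherwise (the negative
  part of the log-density is always P-integrable, so non-integrability means the value is infinite).\<close>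
definition D_KL :: "'a measure \<Rightarrow> 'a measure \<Rightarrow> ennreal" where
  "D_KL P Q =
     (if absolutely_continuous Q P \<and> integrable P (entropy_density (exp 1) Q P)
      then ennreal (KL_divergence (exp 1) Q P) else \<infinity>)"

definition is_cond_kernel ::
  "'x measure \<Rightarrow> 'y measure \<Rightarrow> 'z measure \<Rightarrow> ('x \<times> 'y \<times> 'z) measure \<Rightarrow> 'z measure
     \<Rightarrow> ('z \<Rightarrow> ('x \<times> 'y) measure) \<Rightarrow> bool" where
  "is_cond_kernel MX MY MZ P PZ K \<longleftrightarrow>
     PZ = distr P MZ (\<lambda>w. snd (snd w)) \<and>
     K \<in> measurable MZ (prob_algebra (MX \<Otimes>\<^sub>M MY)) \<and>
     (\<forall>A \<in> sets (MX \<Otimes>\<^sub>M MY). \<forall>C \<in> sets MZ.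
        emeasure P {w \<in> space P. (fst w, fst (snd w)) \<in> A \<and> snd (snd w) \<in> C}
          = (\<integral>\<^sup>+ z. indicator C z * emeasure (K z) A \<partial>PZ))"

definition cond_MI :: "'x measure \<Rightarrow> 'y measure \<Rightarrow> 'z measure \<Rightarrow> ('z \<Rightarrow> ('x \<times> 'y) measure) \<Rightarrow> ennreal" where
  "cond_MI MX MY PZ K =
     (\<integral>\<^sup>+ z. D_KL (K z) (distr (K z) MX fst \<Otimes>\<^sub>M distr (K z) MY snd) \<partial>PZ)"

definition cinfonce_term :: "nat \<Rightarrow> nat \<Rightarrow> ('x \<times> 'y \<times> 'z \<Rightarrow> real) \<Rightarrow> 'z \<Rightarrow> (nat \<Rightarrow> 'x \<times> 'y) \<Rightarrow> real" where
  "cinfonce_term n i f z w =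
     ln (exp (f (fst (w i), snd (w i), z)) /
         ((1 / real n) * (\<Sum>j<n. exp (f (fst (w i), snd (w j), z)))))"

definition cinfonce_inner :: "nat \<Rightarrow> nat \<Rightarrow> ('z \<Rightarrow> ('x \<times> 'y) measure) \<Rightarrow> ('x \<times> 'y \<times> 'z \<Rightarrow> real) \<Rightarrow> 'z \<Rightarrow> real" where
  "cinfonce_inner n i K f z = (\<integral> w. cinfonce_term n i f z w \<partial>(PiM {..<n} (\<lambda>_. K z)))"

definition admissible_critic ::
  "'x measure \<Rightarrow> 'y measure \<Rightarrow> 'z measure \<Rightarrow> 'z measure \<Rightarrow> ('z \<Rightarrow> ('x \<times> 'y) measure)
     \<Rightarrow> nat \<Rightarrow> nat \<Rightarrow> ('x \<times> 'y \<times> 'z \<Rightarrow> real) \<Rightarrow> bool" where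
  "admissible_critic MX MY MZ PZ K n i f \<longleftrightarrow>
     f \<in> borel_measurable (MX \<Otimes>\<^sub>M MY \<Otimes>\<^sub>M MZ) \<and>
     (\<forall>z \<in> space PZ. integrable (PiM {..<n} (\<lambda>_. K z)) (cinfonce_term n i f z)) \<and>
     integrable PZ (cinfonce_inner n i K f)"

definition C_InfoNCE ::
  "'x measure \<Rightarrow> 'y measure \<Rightarrow> 'z measure \<Rightarrow> 'z measure \<Rightarrow> ('z \<Rightarrow> ('x \<times> 'y) measure)
     \<Rightarrow> nat \<Rightarrow> nat \<Rightarrow> ereal" where
  "C_InfoNCE MX MY MZ PZ K n i =
     (SUP f \<in> {f. admissible_critic MX MY MZ PZ K n i f}.
        ereal (\<integral> z. cinfonce_inner n i K f z \<partial>PZ))"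

end

theory Submission
  imports Defs "HOL-Combinatorics.Permutations"
begin

(* For fixed z let mu be the law of (X, Y) given z, nu = mu_X (x) mu_Y and rho = dmu/dnu.
   For a critic g the InfoNCE integrand is ln s, s = e^g(x_i,y_i) / ((1/n) sum_j e^g(x_i,y_j)),
   and ln t <= t - 1 gives ln s - ln rho(x_i,y_i) <= s / rho(x_i,y_i) - 1.  Integrating the
   i-th pair against mu = rho nu bounds E[s / rho] by E[s] with (x_i, y_i) drawn from nu, so
   x_i is independent of all the y_j; for fixed x_i the n weights e^g(x_i,y_j) / sum_k e^g(x_i,y_k)
   are exchangeable and sum to 1, whence E[s] = 1.  Thus the InfoNCE value is at most
   E_mu[ln rho] = D_KL(mu || nu), and integrating over z bounds it by MI(X;Y|Z). *)

lemma nn_integral_PiM_permute: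
  assumes "prob_space \<mu>" and t: "t permutes I"
    and [measurable]: "F \<in> borel_measurable (PiM I (\<lambda>_. \<mu>))"
  shows "(\<integral>\<^sup>+w. F (\<lambda>j\<in>I. w (t j)) \<partial>PiM I (\<lambda>_. \<mu>)) = (\<integral>\<^sup>+w. F w \<partial>PiM I (\<lambda>_. \<mu>))"
proof -
  have tI: "t \<in> I \<rightarrow> I" and inj: "inj_on t I"
    using permutes_imp_bij[OF t] by (auto simp: bij_betw_def)
  have [measurable]: "(\<lambda>w. \<lambda>j\<in>I. w (t j)) \<in> measurable (PiM I (\<lambda>_. \<mu>)) (PiM I (\<lambda>_. \<mu>))"
    using tI by (intro measurable_restrict measurable_component_singleton) auto
  have "(\<integral>\<^sup>+w. F (\<lambda>j\<in>I. w (t j)) \<partial>PiM I (\<lambda>_. \<mu>))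
      = (\<integral>\<^sup>+w. F w \<partial>distr (PiM I (\<lambda>_. \<mu>)) (PiM I (\<lambda>_. \<mu>)) (\<lambda>w. \<lambda>j\<in>I. w (t j)))"
    by (rule nn_integral_distr[symmetric]) measurable
  also have "distr (PiM I (\<lambda>_. \<mu>)) (PiM I (\<lambda>_. \<mu>)) (\<lambda>w. \<lambda>j\<in>I. w (t j)) = PiM I (\<lambda>_. \<mu>)"
    using distr_PiM_reindex[of I "\<lambda>_. \<mu>" t I] assms(1) inj tI by simp
  finally show ?thesis .
qed

lemma nn_integral_PiM_softmax:
  fixes h :: "'a \<Rightarrow> real"
  assumes \<mu>: "prob_space \<mu>" and [measurable]: "h \<in> borel_measurable \<mu>" and i: "i < n"
  shows "(\<integral>\<^sup>+w. ennreal (exp (h (w i)) / ((1 / real n) * (\<Sum>j<n. exp (h (w j)))))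
           \<partial>PiM {..<n} (\<lambda>_. \<mu>)) = 1"
proof -
  let ?M = "PiM {..<n} (\<lambda>_. \<mu>)"
  interpret M: prob_space ?M using \<mu> by (intro prob_space_PiM) auto
  define S where "S w = (\<Sum>j<n. exp (h (w j)))" for w
  define F where "F k w = ennreal (exp (h (w k)) / S w)" for k w
  have S_pos: "0 < S w" for w
    unfolding S_def using i by (intro sum_pos) auto
  have h_coord: "(\<lambda>w. h (w j)) \<in> borel_measurable ?M" if "j < n" for j
    by (rule measurable_compose[OF measurable_component_singleton]) (use that in auto)
  have [measurable]: "F k \<in> borel_measurable ?M" if "k < n" for k
    unfolding F_def S_def using that h_coord
    by (intro measurable_compose[OF _ measurable_ennreal] borel_measurable_divide borel_measurable_sum
        borel_measurable_exp) auto
  have F_eq: "integral\<^sup>N ?M (F k) = integral\<^sup>N ?M (F i)" if k: "k < n" for k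
  proof -
    let ?t = "Transposition.transpose i k"
    have t: "?t permutes {..<n}" using i k by (intro permutes_swap_id) auto
    have "F i (\<lambda>j\<in>{..<n}. w (?t j)) = F k w" for w
      using i k sum.permute[OF t, of "\<lambda>j. exp (h (w j))"] by (simp add: F_def S_def comp_def)
    then show ?thesis
      using nn_integral_PiM_permute[OF \<mu> t, of "F i"] i by simp
  qed
  have F_sum: "(\<Sum>k<n. F k w) = 1" for w
  proof -
    have "(\<Sum>k<n. F k w) = ennreal (\<Sum>k<n. exp (h (w k)) / S w)"
      unfolding F_def using S_pos[of w] by (intro sum_ennreal) auto
    also have "(\<Sum>k<n. exp (h (w k)) / S w) = 1"
      using S_pos[of w] by (simp add: S_def sum_divide_distrib[symmetric])
    finally show ?thesis by simp
  qed
  have "(\<integral>\<^sup>+w. ennreal (exp (h (w i)) / ((1 / real n) * S w)) \<partial>?M) = (\<integral>\<^sup>+w. of_nat n * F i w \<partial>?M)"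
    using i S_pos by (intro nn_integral_cong)
      (simp add: F_def ennreal_of_nat_eq_real_of_nat ennreal_mult'[symmetric] mult.commute)
  also have "\<dots> = of_nat n * integral\<^sup>N ?M (F i)"
    using i by (intro nn_integral_cmult) simp
  also have "\<dots> = (\<Sum>k<n. integral\<^sup>N ?M (F k))"
    using F_eq by simp
  also have "\<dots> = (\<integral>\<^sup>+w. (\<Sum>k<n. F k w) \<partial>?M)"
    by (intro nn_integral_sum[symmetric]) simp
  also have "\<dots> = 1"
    by (simp add: F_sum M.emeasure_space_1)
  finally show ?thesis by (simp add: S_def)
qed

lemma nn_integral_PiM_remove_coordinate:
  fixes i n :: nat
  assumes "sigma_finite_measure \<mu>" and i: "i < n"
    and F: "F \<in> borel_measurable (PiM {..<n} (\<lambda>_. \<mu>))"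
  shows "(\<integral>\<^sup>+w. F w \<partial>PiM {..<n} (\<lambda>_. \<mu>))
    = (\<integral>\<^sup>+w. \<integral>\<^sup>+u. F (w(i := u)) \<partial>\<mu> \<partial>PiM ({..<n} - {i}) (\<lambda>_. \<mu>))"
proof -
  interpret product_sigma_finite "\<lambda>_. \<mu>"
    using assms(1) by (simp add: product_sigma_finite_def)
  have insert: "insert i ({..<n} - {i}) = {..<n}" using i by auto
  show ?thesis
    by (rule product_nn_integral_insert[of "{..<n} - {i}" i F, unfolded insert]) (auto simp: F)
qed

lemma (in sigma_finite_measure) nn_integral_divide_RN_deriv_le:
  assumes ac: "absolutely_continuous M N" and sets_N: "sets N = sets M"
    and [measurable]: "f \<in> borel_measurable M" and f_nonneg: "\<And>x. 0 \<le> f x"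
  shows "(\<integral>\<^sup>+x. ennreal (f x / enn2real (RN_deriv M N x)) \<partial>N) \<le> (\<integral>\<^sup>+x. ennreal (f x) \<partial>M)"
proof -
  have "(\<integral>\<^sup>+x. ennreal (f x / enn2real (RN_deriv M N x)) \<partial>N)
      = (\<integral>\<^sup>+x. RN_deriv M N x * ennreal (f x / enn2real (RN_deriv M N x)) \<partial>M)"
    by (rule RN_deriv_nn_integral[OF ac sets_N]) measurable
  also have "\<dots> \<le> (\<integral>\<^sup>+x. ennreal (f x) \<partial>M)"
    \<comment> \<open>no finiteness of the derivative is needed: where it is infinite, enn2real gives 0 and f x / 0 = 0\<close>
  proof (intro nn_integral_mono)
    fix x
    show "RN_deriv M N x * ennreal (f x / enn2real (RN_deriv M N x)) \<le> ennreal (f x)"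
    proof (cases "RN_deriv M N x")
      case (real r)
      then have "ennreal r * ennreal (f x / r) = ennreal (r * (f x / r))"
        using f_nonneg[of x] by (intro ennreal_mult'[symmetric]) auto
      with real f_nonneg[of x] show ?thesis
        by (cases "r = 0") (auto simp: ennreal_leI)
    qed simp
  qed
  finally show ?thesis .
qed

lemma integral_le_nn_integral_bound:
  fixes h :: "'a \<Rightarrow> real"
  assumes h: "integrable M h" and bound: "\<And>x. x \<in> space M \<Longrightarrow> ennreal (h x) \<le> D x"
  shows "ereal (\<integral>x. h x \<partial>M) \<le> enn2ereal (\<integral>\<^sup>+x. D x \<partial>M)"
proof -
  have "ereal (\<integral>x. h x \<partial>M) \<le> ereal (\<integral>x. max 0 (h x) \<partial>M)"
    using h by (auto intro!: integral_mono)
  also have "\<dots> = enn2ereal (ennreal (\<integral>x. max 0 (h x) \<partial>M))"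
    by (simp add: integral_nonneg_AE)
  also have "ennreal (\<integral>x. max 0 (h x) \<partial>M) = (\<integral>\<^sup>+x. ennreal (h x) \<partial>M)"
    using h by (subst nn_integral_eq_integral[symmetric]) (auto simp: ennreal_max_0)
  also have "enn2ereal (\<integral>\<^sup>+x. ennreal (h x) \<partial>M) \<le> enn2ereal (\<integral>\<^sup>+x. D x \<partial>M)"
    using bound by (simp add: less_eq_ennreal.rep_eq[symmetric] nn_integral_mono)
  finally show ?thesis .
qed

definition infonce_score :: "nat \<Rightarrow> nat \<Rightarrow> ('x \<Rightarrow> 'y \<Rightarrow> real) \<Rightarrow> (nat \<Rightarrow> 'x \<times> 'y) \<Rightarrow> real" where
  "infonce_score n i g w =
     exp (g (fst (w i)) (snd (w i))) / ((1 / real n) * (\<Sum>j<n. exp (g (fst (w i)) (snd (w j)))))"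

lemma infonce_score_pos: "i < n \<Longrightarrow> 0 < infonce_score n i g w"
  unfolding infonce_score_def by (intro divide_pos_pos mult_pos_pos sum_pos) auto

lemma measurable_infonce_score:
  assumes [measurable]: "(\<lambda>(a, b). g a b) \<in> borel_measurable (MX \<Otimes>\<^sub>M MY)"
    and [measurable_cong]: "sets \<mu> = sets (MX \<Otimes>\<^sub>M MY)" and i: "i < n"
  shows "infonce_score n i g \<in> borel_measurable (PiM {..<n} (\<lambda>_. \<mu>))"
proof -
  have [measurable]: "i \<in> {..<n}" using i by simp
  show ?thesis unfolding infonce_score_def by measurable
qed

locale joint_law = prob_space \<mu>
  for MX :: "'x measure" and MY :: "'y measure" and \<mu> :: "('x \<times> 'y) measure" +
  assumes sets_joint[measurable_cong]: "sets \<mu> = sets (MX \<Otimes>\<^sub>M MY)"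
    and abs_cont_marginals: "absolutely_continuous (distr \<mu> MX fst \<Otimes>\<^sub>M distr \<mu> MY snd) \<mu>"
begin

abbreviation marginals :: "('x \<times> 'y) measure" where
  "marginals \<equiv> distr \<mu> MX fst \<Otimes>\<^sub>M distr \<mu> MY snd"

abbreviation density_ratio :: "'x \<times> 'y \<Rightarrow> real" where
  "density_ratio u \<equiv> enn2real (RN_deriv marginals \<mu> u)"

sublocale X: prob_space "distr \<mu> MX fst"
  by (rule prob_space_distr) measurable

sublocale Y: prob_space "distr \<mu> MY snd"
  by (rule prob_space_distr) measurable

sublocale XY: pair_prob_space "distr \<mu> MX fst" "distr \<mu> MY snd" ..

lemma sets_marginals[measurable_cong]: "sets marginals = sets (MX \<Otimes>\<^sub>M MY)"
  by (intro sets_pair_measure_cong) simp_all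

lemma sets_marginals_eq: "sets marginals = sets \<mu>"
  by (simp add: sets_marginals sets_joint)

lemma density_ratio_measurable[measurable]: "density_ratio \<in> borel_measurable \<mu>"
proof -
  have "RN_deriv marginals \<mu> \<in> borel_measurable \<mu>"
    using borel_measurable_RN_deriv[of marginals \<mu>]
    by (simp add: measurable_cong_sets[OF sets_marginals_eq refl])
  then show ?thesis by measurable
qed

lemma AE_density_ratio_pos: "AE u in \<mu>. 0 < density_ratio u"
proof -
  obtain D where "D \<in> borel_measurable marginals"
      and RN_D: "AE u in marginals. RN_deriv marginals \<mu> u = ennreal (D u)"
      and D_pos: "AE u in \<mu>. 0 < D u" and "\<And>u. 0 \<le> D u"
    by (rule XY.real_RN_deriv[OF finite_measure_axioms abs_cont_marginals sets_marginals_eq[symmetric]])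
      blast
  from absolutely_continuous_AE[OF sets_marginals_eq[symmetric] abs_cont_marginals RN_D] D_pos
  show ?thesis
    by eventually_elim simp
qed

lemma nn_integral_infonce_score_independent_pair:
  assumes g[measurable]: "(\<lambda>(a, b). g a b) \<in> borel_measurable (MX \<Otimes>\<^sub>M MY)" and i: "i < n"
    and a: "a \<in> space MX"
  shows "(\<integral>\<^sup>+w. \<integral>\<^sup>+b. ennreal (infonce_score n i g (w(i := (a, b)))) \<partial>distr \<mu> MY snd
           \<partial>PiM ({..<n} - {i}) (\<lambda>_. \<mu>)) = 1"
proof -
  let ?M = "PiM {..<n} (\<lambda>_. \<mu>)" and ?N = "PiM ({..<n} - {i}) (\<lambda>_. \<mu>)"
  have insert: "insert i ({..<n} - {i}) = {..<n}" using i by auto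
  note upd_m = measurable_add_dim[of i "{..<n} - {i}" "\<lambda>_. \<mu>", unfolded insert]
  have ga_m[measurable]: "(\<lambda>u. g a (snd u)) \<in> borel_measurable \<mu>"
    using a by measurable
  have score_a_m[measurable]: "infonce_score n i (\<lambda>_. g a) \<in> borel_measurable ?M"
    using a by (intro measurable_infonce_score[OF _ sets_joint i]) measurable
  have "(\<integral>\<^sup>+w. \<integral>\<^sup>+b. ennreal (infonce_score n i g (w(i := (a, b)))) \<partial>distr \<mu> MY snd \<partial>?N)
      = (\<integral>\<^sup>+w. \<integral>\<^sup>+u. ennreal (infonce_score n i (\<lambda>_. g a) (w(i := u))) \<partial>\<mu> \<partial>?N)"
  proof (rule nn_integral_cong)
    fix w assume w: "w \<in> space ?N"
    have "Pair a \<in> measurable MY \<mu>"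
      using measurable_Pair1'[OF a] by (simp add: measurable_cong_sets[OF refl sets_joint])
    from measurable_compose[OF this measurable_Pair1'[OF w]]
    have "(\<lambda>b. (w, (a, b))) \<in> measurable MY (?N \<Otimes>\<^sub>M \<mu>)" .
    from measurable_compose[OF measurable_compose[OF this upd_m] measurable_infonce_score[OF g sets_joint i]]
    have [measurable]: "(\<lambda>b. infonce_score n i g (w(i := (a, b)))) \<in> borel_measurable MY"
      by simp
    have "(\<integral>\<^sup>+b. ennreal (infonce_score n i g (w(i := (a, b)))) \<partial>distr \<mu> MY snd)
        = (\<integral>\<^sup>+u. ennreal (infonce_score n i g (w(i := (a, snd u)))) \<partial>\<mu>)"
      by (rule nn_integral_distr) measurable
    also have "\<dots> = (\<integral>\<^sup>+u. ennreal (infonce_score n i (\<lambda>_. g a) (w(i := u))) \<partial>\<mu>)"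
      by (simp add: infonce_score_def fun_upd_def if_distrib[where f = snd] cong: if_cong)
    finally show "(\<integral>\<^sup>+b. ennreal (infonce_score n i g (w(i := (a, b)))) \<partial>distr \<mu> MY snd)
        = (\<integral>\<^sup>+u. ennreal (infonce_score n i (\<lambda>_. g a) (w(i := u))) \<partial>\<mu>)" .
  qed
  also have "\<dots> = (\<integral>\<^sup>+w. ennreal (infonce_score n i (\<lambda>_. g a) w) \<partial>?M)"
    by (subst nn_integral_PiM_remove_coordinate[OF sigma_finite_measure_axioms i]) simp_all
  also have "\<dots> = 1"
    using nn_integral_PiM_softmax[OF prob_space_axioms ga_m i] by (simp add: infonce_score_def)
  finally show ?thesis .
qed

lemma nn_integral_infonce_score_le_1:
  assumes g[measurable]: "(\<lambda>(a, b). g a b) \<in> borel_measurable (MX \<Otimes>\<^sub>M MY)" and i: "i < n"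
  shows "(\<integral>\<^sup>+w. ennreal (infonce_score n i g w / density_ratio (w i)) \<partial>PiM {..<n} (\<lambda>_. \<mu>)) \<le> 1"
proof -
  let ?M = "PiM {..<n} (\<lambda>_. \<mu>)" and ?N = "PiM ({..<n} - {i}) (\<lambda>_. \<mu>)"
  interpret N: prob_space ?N
    by (intro prob_space_PiM) (simp add: prob_space_axioms)
  interpret NX: pair_sigma_finite ?N "distr \<mu> MX fst" ..
  have [measurable]: "i \<in> {..<n}" using i by simp
  have score_m[measurable]: "infonce_score n i g \<in> borel_measurable ?M"
    by (rule measurable_infonce_score[OF g sets_joint i])
  have insert: "insert i ({..<n} - {i}) = {..<n}" using i by auto
  note upd_m = measurable_add_dim[of i "{..<n} - {i}" "\<lambda>_. \<mu>", unfolded insert]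
  define \<Phi> where "\<Phi> w a b = ennreal (infonce_score n i g (w(i := (a, b))))" for w a b
  have "(\<lambda>x. (fst (fst x), (snd (fst x), snd x)))
      \<in> measurable ((?N \<Otimes>\<^sub>M distr \<mu> MX fst) \<Otimes>\<^sub>M distr \<mu> MY snd) (?N \<Otimes>\<^sub>M \<mu>)"
    by measurable
  from measurable_compose[OF measurable_compose[OF this upd_m] score_m]
  have \<Phi>_m: "(\<lambda>x. \<Phi> (fst (fst x)) (snd (fst x)) (snd x))
      \<in> borel_measurable ((?N \<Otimes>\<^sub>M distr \<mu> MX fst) \<Otimes>\<^sub>M distr \<mu> MY snd)"
    unfolding \<Phi>_def by (simp add: measurable_compose[OF _ measurable_ennreal])
  have section_m: "(\<lambda>u. infonce_score n i g (w(i := u))) \<in> borel_measurable marginals"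
    if "w \<in> space ?N" for w
    using measurable_compose[OF measurable_compose[OF measurable_Pair1'[OF that] upd_m] score_m]
    by (simp add: measurable_cong_sets[OF sets_marginals_eq refl])
  have "(\<integral>\<^sup>+w. ennreal (infonce_score n i g w / density_ratio (w i)) \<partial>?M)
      = (\<integral>\<^sup>+w. \<integral>\<^sup>+u. ennreal (infonce_score n i g (w(i := u)) / density_ratio u) \<partial>\<mu> \<partial>?N)"
    by (subst nn_integral_PiM_remove_coordinate[OF sigma_finite_measure_axioms i]) simp_all
  also have "\<dots> \<le> (\<integral>\<^sup>+w. \<integral>\<^sup>+u. ennreal (infonce_score n i g (w(i := u))) \<partial>marginals \<partial>?N)"
  proof (rule nn_integral_mono)
    fix w assume "w \<in> space ?N"
    from section_m[OF this]
    show "(\<integral>\<^sup>+u. ennreal (infonce_score n i g (w(i := u)) / density_ratio u) \<partial>\<mu>)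
        \<le> (\<integral>\<^sup>+u. ennreal (infonce_score n i g (w(i := u))) \<partial>marginals)"
      by (intro XY.nn_integral_divide_RN_deriv_le[OF abs_cont_marginals sets_marginals_eq[symmetric]]
          less_imp_le[OF infonce_score_pos[OF i]]) simp
  qed
  also have "\<dots> = (\<integral>\<^sup>+w. \<integral>\<^sup>+a. \<integral>\<^sup>+b. \<Phi> w a b \<partial>distr \<mu> MY snd \<partial>distr \<mu> MX fst \<partial>?N)"
  proof (rule nn_integral_cong)
    fix w assume "w \<in> space ?N"
    from Y.nn_integral_fst[OF measurable_compose[OF section_m[OF this] measurable_ennreal]]
    show "(\<integral>\<^sup>+u. ennreal (infonce_score n i g (w(i := u))) \<partial>marginals)
        = (\<integral>\<^sup>+a. \<integral>\<^sup>+b. \<Phi> w a b \<partial>distr \<mu> MY snd \<partial>distr \<mu> MX fst)"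
      by (simp add: \<Phi>_def)
  qed
  also have "\<dots> = (\<integral>\<^sup>+a. \<integral>\<^sup>+w. \<integral>\<^sup>+b. \<Phi> w a b \<partial>distr \<mu> MY snd \<partial>?N \<partial>distr \<mu> MX fst)"
    by (rule NX.Fubini'[symmetric]) (use Y.borel_measurable_nn_integral_fst[OF \<Phi>_m] in \<open>simp add: split_beta'\<close>)
  also have "\<dots> = (\<integral>\<^sup>+a. 1 \<partial>distr \<mu> MX fst)"
    unfolding \<Phi>_def by (intro nn_integral_cong nn_integral_infonce_score_independent_pair[OF g i]) simp
  also have "\<dots> = 1"
    using X.emeasure_space_1 by simp
  finally show ?thesis .
qed

lemma entropy_density_exp_1: "entropy_density (exp 1) marginals \<mu> = (\<lambda>u. ln (density_ratio u))"
  by (simp add: entropy_density_def log_def fun_eq_iff)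

lemma integral_ln_infonce_score_le_KL_divergence:
  assumes g[measurable]: "(\<lambda>(a, b). g a b) \<in> borel_measurable (MX \<Otimes>\<^sub>M MY)" and i: "i < n"
    and score_int: "integrable (PiM {..<n} (\<lambda>_. \<mu>)) (\<lambda>w. ln (infonce_score n i g w))"
    and KL_int: "integrable \<mu> (entropy_density (exp 1) marginals \<mu>)"
  shows "(\<integral>w. ln (infonce_score n i g w) \<partial>PiM {..<n} (\<lambda>_. \<mu>)) \<le> KL_divergence (exp 1) marginals \<mu>"
proof -
  let ?M = "PiM {..<n} (\<lambda>_. \<mu>)"
  interpret M: prob_space ?M
    by (intro prob_space_PiM) (simp add: prob_space_axioms)
  have [measurable]: "i \<in> {..<n}" using i by simp
  have [measurable]: "infonce_score n i g \<in> borel_measurable ?M"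
    by (rule measurable_infonce_score[OF g sets_joint i])
  define R where "R w = infonce_score n i g w / density_ratio (w i)" for w
  have R_nonneg: "0 \<le> R w" for w
    unfolding R_def using infonce_score_pos[OF i, of g w] by simp
  have R_m: "R \<in> borel_measurable ?M"
    unfolding R_def by measurable
  have R_nn_int: "(\<integral>\<^sup>+w. ennreal (R w) \<partial>?M) \<le> 1"
    unfolding R_def by (rule nn_integral_infonce_score_le_1[OF g i])
  then have R_int: "integrable ?M R"
    using R_m R_nonneg by (intro integrableI_nonneg) (auto intro: le_less_trans)
  have "ennreal (\<integral>w. R w \<partial>?M) \<le> 1"
    using R_nn_int by (simp add: nn_integral_eq_integral[OF R_int] R_nonneg)
  then have R_le: "(\<integral>w. R w \<partial>?M) \<le> 1"
    by simp
  have component: "distr ?M \<mu> (\<lambda>w. w i) = \<mu>"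
    using distr_PiM_component[of "{..<n}" "\<lambda>_. \<mu>" i] i by (simp add: prob_space_axioms)
  have ln_int: "integrable ?M (\<lambda>w. ln (density_ratio (w i)))"
    using KL_int integrable_distr_eq[of "\<lambda>w. w i" ?M \<mu> "\<lambda>u. ln (density_ratio u)"]
    by (simp add: component entropy_density_exp_1)
  have ln_integral: "(\<integral>w. ln (density_ratio (w i)) \<partial>?M) = KL_divergence (exp 1) marginals \<mu>"
    using integral_distr[of "\<lambda>w. w i" ?M \<mu> "\<lambda>u. ln (density_ratio u)"]
    by (simp add: component KL_divergence_def entropy_density_exp_1)
  have "AE w in ?M. 0 < density_ratio (w i)"
    using AE_PiM_component[of "{..<n}" "\<lambda>_. \<mu>" i, OF _ _ AE_density_ratio_pos] i
    by (simp add: prob_space_axioms)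
  then have "AE w in ?M. ln (infonce_score n i g w) - ln (density_ratio (w i)) + 1 \<le> R w"
  proof eventually_elim
    fix w assume ratio_pos: "0 < density_ratio (w i)"
    have "ln (infonce_score n i g w) - ln (density_ratio (w i)) = ln (R w)"
      using infonce_score_pos[OF i, of g w] ratio_pos by (simp add: R_def ln_div)
    also have "\<dots> \<le> R w - 1"
      using infonce_score_pos[OF i, of g w] ratio_pos by (intro ln_le_minus_one) (simp add: R_def)
    finally show "ln (infonce_score n i g w) - ln (density_ratio (w i)) + 1 \<le> R w"
      by simp
  qed
  then have "(\<integral>w. ln (infonce_score n i g w) - ln (density_ratio (w i)) + 1 \<partial>?M) \<le> (\<integral>w. R w \<partial>?M)"
    using score_int ln_int R_int by (intro integral_mono_AE) auto
  then show ?thesis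
    using score_int ln_int R_le ln_integral by (simp add: M.prob_space)
qed

end

lemma integral_cinfonce_term_le_D_KL:
  fixes f :: "'x \<times> 'y \<times> 'z \<Rightarrow> real" and \<mu> :: "('x \<times> 'y) measure"
  assumes "prob_space \<mu>" and "sets \<mu> = sets (MX \<Otimes>\<^sub>M MY)"
    and f: "(\<lambda>(a, b). f (a, b, z)) \<in> borel_measurable (MX \<Otimes>\<^sub>M MY)" and i: "i < n"
    and term_int: "integrable (PiM {..<n} (\<lambda>_. \<mu>)) (cinfonce_term n i f z)"
  shows "ennreal (\<integral>w. cinfonce_term n i f z w \<partial>PiM {..<n} (\<lambda>_. \<mu>))
           \<le> D_KL \<mu> (distr \<mu> MX fst \<Otimes>\<^sub>M distr \<mu> MY snd)"
proof (cases "absolutely_continuous (distr \<mu> MX fst \<Otimes>\<^sub>M distr \<mu> MY snd) \<mu> \<and>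
    integrable \<mu> (entropy_density (exp 1) (distr \<mu> MX fst \<Otimes>\<^sub>M distr \<mu> MY snd) \<mu>)")
  case True
  then interpret joint_law MX MY \<mu>
    using assms by (simp add: joint_law_def joint_law_axioms_def)
  have "cinfonce_term n i f z = (\<lambda>w. ln (infonce_score n i (\<lambda>a b. f (a, b, z)) w))"
    by (simp add: fun_eq_iff cinfonce_term_def infonce_score_def)
  with integral_ln_infonce_score_le_KL_divergence[of "\<lambda>a b. f (a, b, z)", OF f i] term_int True
  show ?thesis
    by (simp add: D_KL_def ennreal_leI)
qed (auto simp: D_KL_def)

theorem proposition2p3:
  fixes MX :: "'x measure" and MY :: "'y measure" and MZ :: "'z measure"
    and P :: "('x \<times> 'y \<times> 'z) measure" and PZ :: "'z measure"
    and K :: "'z \<Rightarrow> ('x \<times> 'y) measure"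
    and n i :: nat
  assumes "prob_space P"
    and "sets P = sets (MX \<Otimes>\<^sub>M MY \<Otimes>\<^sub>M MZ)"
    and "is_cond_kernel MX MY MZ P PZ K"
    and "1 \<le> n" and "i < n"
  shows "C_InfoNCE MX MY MZ PZ K n i \<le> enn2ereal (cond_MI MX MY PZ K)"
  unfolding C_InfoNCE_def cond_MI_def
proof (rule SUP_least)
  fix f assume "f \<in> {f. admissible_critic MX MY MZ PZ K n i f}"
  then have f[measurable]: "f \<in> borel_measurable (MX \<Otimes>\<^sub>M MY \<Otimes>\<^sub>M MZ)"
    and term_int: "\<And>z. z \<in> space PZ \<Longrightarrow> integrable (PiM {..<n} (\<lambda>_. K z)) (cinfonce_term n i f z)"
    and inner_int: "integrable PZ (cinfonce_inner n i K f)"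
    by (auto simp: admissible_critic_def)
  from assms(3) have space_PZ: "space PZ = space MZ"
    and K: "K \<in> measurable MZ (prob_algebra (MX \<Otimes>\<^sub>M MY))"
    by (auto simp: is_cond_kernel_def)
  have "ennreal (cinfonce_inner n i K f z) \<le> D_KL (K z) (distr (K z) MX fst \<Otimes>\<^sub>M distr (K z) MY snd)"
    if z: "z \<in> space PZ" for z
  proof -
    have z_MZ: "z \<in> space MZ"
      using z space_PZ by simp
    have "K z \<in> space (prob_algebra (MX \<Otimes>\<^sub>M MY))"
      using measurable_space[OF K z_MZ] .
    moreover have "(\<lambda>(a, b). f (a, b, z)) \<in> borel_measurable (MX \<Otimes>\<^sub>M MY)"
      using z_MZ by measurable
    ultimately show ?thesis
      unfolding cinfonce_inner_def using assms(5) term_int[OF z]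
      by (intro integral_cinfonce_term_le_D_KL) (auto simp: space_prob_algebra)
  qed
  with inner_int show "ereal (\<integral>z. cinfonce_inner n i K f z \<partial>PZ)
      \<le> enn2ereal (\<integral>\<^sup>+z. D_KL (K z) (distr (K z) MX fst \<Otimes>\<^sub>M distr (K z) MY snd) \<partial>PZ)"
    by (rule integral_le_nn_integral_bound)
qed

end
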